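(* Let $p\ge 2$ be an integer, set $q=\lfloor p/2\rfloor$, let $G$ be a graph and $v$ a vertex of $G$ of degree $d(v)$. Then (i) $\mathrm{id}^{\leq p}(G)\le \mathrm{id}^{\leq p}(G-v)+\left\lceil\frac{d(v)}{p-1}\right\rceil$; and (ii) if $d(v)\ge q$, then $\mathrm{id}^{\leq p}(G)\le \mathrm{id}^{\leq p}(G-v)+\left\lfloor \frac{d(v)}{q}\right\rfloor$.
   Context: All graphs are finite and simple. For an oriented graph $D$ and $X\subseteq V(D)$, the inversion of $X$ reverses every arc with both endvertices in $X$; a $(\leq p)$-inversion is the inversion of a set of at most $p$ vertices. $\mathrm{id}^{\leq p}(G)$ is the maximum, over all ordered pairs $(\vec G_1,\vec G_2)$ of orientations of $G$, of the minimum number of $(\leq p)$-inversions transforming $\vec G_1$ into $\vec G_2$. *)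

theory Defs
  imports Complex_Main
begin

definition simple_graph :: "'a set \<Rightarrow> 'a set set \<Rightarrow> bool" where
  "simple_graph V E \<longleftrightarrow> finite V \<and> (\<forall>e\<in>E. e \<subseteq> V \<and> card e = 2)"

definition degree :: "'a set set \<Rightarrow> 'a \<Rightarrow> nat" where
  "degree E v = card {e\<in>E. v \<in> e}"

definition del_vertex_V :: "'a set \<Rightarrow> 'a \<Rightarrow> 'a set" where
  "del_vertex_V V v = V - {v}"

definition del_vertex_E :: "'a set set \<Rightarrow> 'a \<Rightarrow> 'a set set" where
  "del_vertex_E E v = {e\<in>E. v \<notin> e}"

definition is_orientation :: "'a set \<Rightarrow> 'a set set \<Rightarrow> ('a \<times> 'a) set \<Rightarrow> bool" where
  "is_orientation V E A \<longleftrightarrow>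
     (\<forall>(x,y)\<in>A. x \<noteq> y \<and> {x,y} \<in> E) \<and>
     (\<forall>x y. x \<noteq> y \<and> {x,y} \<in> E \<longrightarrow> ((x,y) \<in> A \<longleftrightarrow> (y,x) \<notin> A))"

definition invert :: "'a set \<Rightarrow> ('a \<times> 'a) set \<Rightarrow> ('a \<times> 'a) set" where
  "invert X A = {(x,y)\<in>A. \<not> (x \<in> X \<and> y \<in> X)} \<union> {(y,x) | x y. (x,y) \<in> A \<and> x \<in> X \<and> y \<in> X}"

definition inv_dist :: "nat \<Rightarrow> 'a set \<Rightarrow> ('a \<times> 'a) set \<Rightarrow> ('a \<times> 'a) set \<Rightarrow> nat" where
  "inv_dist p V A B = (LEAST k. \<exists>Xs. length Xs = k \<and> (\<forall>X\<in>set Xs. X \<subseteq> V \<and> card X \<le> p)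
                                  \<and> foldl (\<lambda>D X. invert X D) A Xs = B)"

definition inv_diam :: "nat \<Rightarrow> 'a set \<Rightarrow> 'a set set \<Rightarrow> nat" where
  "inv_diam p V E = Max {inv_dist p V A B | A B. is_orientation V E A \<and> is_orientation V E B}"

end

theory Submission
  imports Defs
begin

text \<open>Fix orientations A and B of G and let S be the set of neighbours u of v such that the
  edge uv is oriented differently in A and B. After a sequence of inversions an edge xy is
  reversed iff an odd number of the inverted sets contain both x and y. Hence, splitting S into
  \<open>\<lceil>d(v)/(p-1)\<rceil>\<close> blocks T and inverting every set \<open>{v} \<union> T\<close> makes all edges at v agree
  with B; the remaining differences lie in G - v and are removed by at most
  \<open>id\<^sup>\<le>\<^sup>p(G - v)\<close> inversions of sets avoiding v, which leave the edges at v alone.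
  Part (ii) follows from (i), because \<open>p - 1 \<ge> 2q - 1\<close> gives
  \<open>\<lceil>d/(p-1)\<rceil> \<le> \<lfloor>d/q\<rfloor>\<close> as soon as \<open>d \<ge> q\<close>.\<close>

abbreviation invert_list :: "'a set list \<Rightarrow> ('a \<times> 'a) set \<Rightarrow> ('a \<times> 'a) set" where
  "invert_list Xs A \<equiv> foldl (\<lambda>D X. invert X D) A Xs"

abbreviation inversion_sets :: "nat \<Rightarrow> 'a set \<Rightarrow> 'a set list \<Rightarrow> bool" where
  "inversion_sets p V Xs \<equiv> \<forall>X\<in>set Xs. X \<subseteq> V \<and> card X \<le> p"

definition cover_count :: "'a set list \<Rightarrow> 'a \<Rightarrow> 'a \<Rightarrow> nat" where
  "cover_count Xs x y = length (filter (\<lambda>X. x \<in> X \<and> y \<in> X) Xs)"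

lemma cover_count_commute: "cover_count Xs x y = cover_count Xs y x"
  unfolding cover_count_def by (metis conj_commute)

lemma invert_iff: "(x,y) \<in> invert X A \<longleftrightarrow> (if x \<in> X \<and> y \<in> X then (y,x) \<in> A else (x,y) \<in> A)"
  by (auto simp: invert_def)

lemma invert_list_iff:
  "(x,y) \<in> invert_list Xs A \<longleftrightarrow> (if odd (cover_count Xs x y) then (y,x) \<in> A else (x,y) \<in> A)"
proof (induction Xs arbitrary: A)
  case Nil
  then show ?case by (simp add: cover_count_def)
next
  case (Cons X Xs)
  show ?case using Cons[of "invert X A"] by (auto simp: cover_count_def invert_iff)
qed

lemma simple_graph_finite_edges: "simple_graph V E \<Longrightarrow> finite E"
  unfolding simple_graph_def by (meson finite_Pow_iff finite_subset PowI subsetI)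

lemma simple_graph_edge_neq: "simple_graph V E \<Longrightarrow> {x,y} \<in> E \<Longrightarrow> x \<noteq> y"
  unfolding simple_graph_def by fastforce

lemma simple_graph_edge_eq:
  assumes "simple_graph V E" "e \<in> E" "x \<in> e" "y \<in> e" "x \<noteq> y"
  shows "e = {x,y}"
proof (rule card_subset_eq[symmetric])
  have "card e = 2" using assms unfolding simple_graph_def by auto
  then show "finite e" using card.infinite by fastforce
  show "{x,y} \<subseteq> e" using assms(3,4) by simp
  show "card {x,y} = card e" using assms(5) \<open>card e = 2\<close> by simp
qed

lemma simple_graph_del_vertex:
  "simple_graph V E \<Longrightarrow> simple_graph (del_vertex_V V v) (del_vertex_E E v)"
  unfolding simple_graph_def del_vertex_V_def del_vertex_E_def by auto

lemma is_orientation_arcD: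
  "is_orientation V E A \<Longrightarrow> (x,y) \<in> A \<Longrightarrow> x \<noteq> y \<and> {x,y} \<in> E"
  unfolding is_orientation_def by auto

lemma is_orientation_reverse_iff:
  "is_orientation V E A \<Longrightarrow> x \<noteq> y \<Longrightarrow> {x,y} \<in> E \<Longrightarrow> (y,x) \<in> A \<longleftrightarrow> (x,y) \<notin> A"
  unfolding is_orientation_def by auto

lemma is_orientation_invert_list:
  assumes A: "is_orientation V E A"
  shows "is_orientation V E (invert_list Xs A)"
proof -
  have "x \<noteq> y \<and> {x,y} \<in> E" if "(x,y) \<in> invert_list Xs A" for x y
    using that is_orientation_arcD[OF A, of x y] is_orientation_arcD[OF A, of y x]
    by (auto simp: invert_list_iff insert_commute split: if_splits)
  moreover have "(x,y) \<in> invert_list Xs A \<longleftrightarrow> (y,x) \<notin> invert_list Xs A"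
    if "x \<noteq> y" "{x,y} \<in> E" for x y
    using that is_orientation_reverse_iff[OF A, of x y] cover_count_commute[of Xs x y]
    by (auto simp: invert_list_iff)
  ultimately show ?thesis unfolding is_orientation_def by auto
qed

lemma invert_list_edge_iff:
  assumes "is_orientation V E A" "x \<noteq> y" "{x,y} \<in> E"
  shows "(x,y) \<in> invert_list Xs A \<longleftrightarrow> ((x,y) \<in> A \<longleftrightarrow> even (cover_count Xs x y))"
  using is_orientation_reverse_iff[OF assms] by (auto simp: invert_list_iff)

lemma invert_list_eqI:
  assumes A: "is_orientation V E A" and B: "is_orientation V E B"
    and parity: "\<And>x y. x \<noteq> y \<Longrightarrow> {x,y} \<in> E \<Longrightarrow>
                   (x,y) \<in> B \<longleftrightarrow> ((x,y) \<in> A \<longleftrightarrow> even (cover_count Xs x y))"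
  shows "invert_list Xs A = B"
proof (intro set_eqI, clarify)
  fix x y
  show "(x,y) \<in> invert_list Xs A \<longleftrightarrow> (x,y) \<in> B"
  proof (cases "x \<noteq> y \<and> {x,y} \<in> E")
    case True
    then show ?thesis using invert_list_edge_iff[OF A] parity by blast
  next
    case False
    then show ?thesis
      using is_orientation_arcD[OF is_orientation_invert_list[OF A], of x y]
        is_orientation_arcD[OF B, of x y] by blast
  qed
qed

lemma orientation_exists:
  assumes "simple_graph V E"
  shows "\<exists>A. is_orientation V E A"
proof -
  have "finite V" using assms unfolding simple_graph_def by auto
  then obtain f :: "'a \<Rightarrow> nat" where f: "inj_on f V"
    using finite_imp_inj_to_nat_seg by blast
  define A where "A = {(x,y). {x,y} \<in> E \<and> x \<noteq> y \<and> f x < f y}"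
  have "x \<noteq> y \<Longrightarrow> {x,y} \<in> E \<Longrightarrow> f x \<noteq> f y" for x y
    using assms f unfolding simple_graph_def by (meson inj_on_contraD insert_subset)
  then have "is_orientation V E A" unfolding is_orientation_def A_def
    by (auto simp: insert_commute) (meson linorder_neqE_nat)
  then show ?thesis by blast
qed

lemma is_orientation_subset:
  "simple_graph V E \<Longrightarrow> is_orientation V E A \<Longrightarrow> A \<subseteq> V \<times> V"
  unfolding is_orientation_def simple_graph_def by fastforce

lemma is_orientation_del_vertex:
  "is_orientation V E A \<Longrightarrow>
     is_orientation (del_vertex_V V v) (del_vertex_E E v) {(x,y) \<in> A. x \<noteq> v \<and> y \<noteq> v}"
  unfolding is_orientation_def del_vertex_E_def del_vertex_V_def by auto

lemma orientations_connected:
  assumes G: "simple_graph V E" and p: "p \<ge> 2"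
    and A: "is_orientation V E A" and B: "is_orientation V E B"
  shows "\<exists>Xs. inversion_sets p V Xs \<and> invert_list Xs A = B"
proof -
  define F where "F = {{x,y} | x y. (x,y) \<in> A \<and> (x,y) \<notin> B}"
  have "F \<subseteq> E" unfolding F_def using is_orientation_arcD[OF A] by auto
  moreover have "finite E" using simple_graph_finite_edges[OF G] .
  ultimately obtain Xs where Xs: "set Xs = F" "distinct Xs"
    using finite_distinct_list finite_subset by metis
  have "inversion_sets p V Xs"
    using Xs(1) \<open>F \<subseteq> E\<close> G p unfolding simple_graph_def by auto
  moreover have "invert_list Xs A = B"
  proof (rule invert_list_eqI[OF A B])
    fix x y assume xy: "x \<noteq> y" "{x,y} \<in> E"
    have "{X \<in> F. x \<in> X \<and> y \<in> X} = (if {x,y} \<in> F then {{x,y}} else {})"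
      using simple_graph_edge_eq[OF G _ _ _ xy(1)] \<open>F \<subseteq> E\<close> by auto
    then have "cover_count Xs x y = (if {x,y} \<in> F then 1 else 0)"
      unfolding cover_count_def distinct_length_filter[OF Xs(2)] Xs(1)
      by (simp add: Collect_conj_eq Int_commute)
    moreover have "{x,y} \<in> F \<longleftrightarrow> ((x,y) \<in> A \<longleftrightarrow> (x,y) \<notin> B)"
      using is_orientation_reverse_iff[OF A xy] is_orientation_reverse_iff[OF B xy]
      unfolding F_def by (auto simp: doubleton_eq_iff)
    ultimately show "(x,y) \<in> B \<longleftrightarrow> ((x,y) \<in> A \<longleftrightarrow> even (cover_count Xs x y))"
      by auto
  qed
  ultimately show ?thesis by blast
qed

lemma inv_dist_le_length:
  "inversion_sets p V Xs \<Longrightarrow> invert_list Xs A = B \<Longrightarrow> inv_dist p V A B \<le> length Xs"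
  unfolding inv_dist_def by (rule Least_le) blast

lemma inv_dist_witness:
  assumes "simple_graph V E" "p \<ge> 2" "is_orientation V E A" "is_orientation V E B"
  shows "\<exists>Xs. length Xs = inv_dist p V A B \<and> inversion_sets p V Xs \<and> invert_list Xs A = B"
proof -
  have "\<exists>k Xs. length Xs = k \<and> inversion_sets p V Xs \<and> invert_list Xs A = B"
    using orientations_connected[OF assms] by blast
  from LeastI_ex[OF this] show ?thesis unfolding inv_dist_def .
qed

lemma inv_dist_triangle:
  assumes G: "simple_graph V E" and p: "p \<ge> 2" and A: "is_orientation V E A"
    and B: "is_orientation V E B" and C: "is_orientation V E C"
  shows "inv_dist p V A C \<le> inv_dist p V A B + inv_dist p V B C"
proof -
  obtain Xs where Xs: "length Xs = inv_dist p V A B" "inversion_sets p V Xs" "invert_list Xs A = B"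
    using inv_dist_witness[OF G p A B] by blast
  obtain Ys where Ys: "length Ys = inv_dist p V B C" "inversion_sets p V Ys" "invert_list Ys B = C"
    using inv_dist_witness[OF G p B C] by blast
  have "inv_dist p V A C \<le> length (Xs @ Ys)"
    using Xs Ys by (intro inv_dist_le_length) auto
  then show ?thesis using Xs(1) Ys(1) by simp
qed

lemma finite_inv_dists:
  assumes "simple_graph V E"
  shows "finite {inv_dist p V A B | A B. is_orientation V E A \<and> is_orientation V E B}"
proof (rule finite_subset)
  show "{inv_dist p V A B | A B. is_orientation V E A \<and> is_orientation V E B}
     \<subseteq> (\<lambda>(A,B). inv_dist p V A B) ` (Pow (V \<times> V) \<times> Pow (V \<times> V))"
    using is_orientation_subset[OF assms] by fastforce
  show "finite ((\<lambda>(A,B). inv_dist p V A B) ` (Pow (V \<times> V) \<times> Pow (V \<times> V)))"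
    using assms unfolding simple_graph_def by simp
qed

lemma inv_dist_le_inv_diam:
  "simple_graph V E \<Longrightarrow> is_orientation V E A \<Longrightarrow> is_orientation V E B \<Longrightarrow>
     inv_dist p V A B \<le> inv_diam p V E"
  unfolding inv_diam_def by (rule Max_ge[OF finite_inv_dists]) blast+

lemma inv_diam_le:
  assumes G: "simple_graph V E"
    and bound: "\<And>A B. is_orientation V E A \<Longrightarrow> is_orientation V E B \<Longrightarrow> inv_dist p V A B \<le> k"
  shows "inv_diam p V E \<le> k"
proof -
  obtain A where "is_orientation V E A" using orientation_exists[OF G] by blast
  then show ?thesis unfolding inv_diam_def
    using finite_inv_dists[OF G] bound by (subst Max_le_iff) blast+
qed

text \<open>Only the arcs leaving v are compared: for orientations of the same graph the arcs
  entering v then agree as well.\<close>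

definition agree_at :: "'a set set \<Rightarrow> 'a \<Rightarrow> ('a \<times> 'a) set \<Rightarrow> ('a \<times> 'a) set \<Rightarrow> bool" where
  "agree_at E v A B \<longleftrightarrow> (\<forall>u. {v,u} \<in> E \<longrightarrow> ((v,u) \<in> A \<longleftrightarrow> (v,u) \<in> B))"

lemma inv_dist_le_inv_diam_del_vertex:
  assumes G: "simple_graph V E" and p: "p \<ge> 2"
    and A: "is_orientation V E A" and B: "is_orientation V E B" and agree: "agree_at E v A B"
  shows "inv_dist p V A B \<le> inv_diam p (del_vertex_V V v) (del_vertex_E E v)"
proof -
  let ?V' = "del_vertex_V V v" and ?E' = "del_vertex_E E v"
  define A' where "A' = {(x,y) \<in> A. x \<noteq> v \<and> y \<noteq> v}"
  define B' where "B' = {(x,y) \<in> B. x \<noteq> v \<and> y \<noteq> v}"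
  have G': "simple_graph ?V' ?E'" using simple_graph_del_vertex[OF G] .
  have A': "is_orientation ?V' ?E' A'" unfolding A'_def by (rule is_orientation_del_vertex[OF A])
  have B': "is_orientation ?V' ?E' B'" unfolding B'_def by (rule is_orientation_del_vertex[OF B])
  obtain Ys where Ys: "length Ys = inv_dist p ?V' A' B'" "inversion_sets p ?V' Ys"
    "invert_list Ys A' = B'"
    using inv_dist_witness[OF G' p A' B'] by blast
  have "invert_list Ys A = B"
  proof (rule invert_list_eqI[OF A B])
    fix x y assume xy: "x \<noteq> y" "{x,y} \<in> E"
    show "(x,y) \<in> B \<longleftrightarrow> ((x,y) \<in> A \<longleftrightarrow> even (cover_count Ys x y))"
    proof (cases "x = v \<or> y = v")
      case True
      then have "cover_count Ys x y = 0"
        using Ys(2) unfolding cover_count_def del_vertex_V_def by (auto simp: filter_empty_conv)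
      moreover have "(x,y) \<in> A \<longleftrightarrow> (x,y) \<in> B"
        using True agree xy is_orientation_reverse_iff[OF A xy] is_orientation_reverse_iff[OF B xy]
        unfolding agree_at_def by (auto simp: insert_commute)
      ultimately show ?thesis by simp
    next
      case False
      then have "{x,y} \<in> ?E'" using xy(2) unfolding del_vertex_E_def by auto
      then show ?thesis
        using invert_list_edge_iff[OF A' xy(1), of Ys] Ys(3) False unfolding A'_def B'_def by auto
    qed
  qed
  then have "inv_dist p V A B \<le> length Ys"
    using Ys(2) by (intro inv_dist_le_length) (auto simp: del_vertex_V_def)
  also have "\<dots> \<le> inv_diam p ?V' ?E'"
    using Ys(1) inv_dist_le_inv_diam[OF G' A' B'] by simp
  finally show ?thesis .
qed

lemma split_into_blocks:
  assumes "finite S" "card S \<le> k * m"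
  shows "\<exists>Ts. length Ts = k \<and> (\<forall>T\<in>set Ts. T \<subseteq> S \<and> card T \<le> m)
               \<and> (\<forall>u\<in>S. length (filter (\<lambda>T. u \<in> T) Ts) = 1)"
  using assms
proof (induction k arbitrary: S)
  case 0
  then show ?case by (intro exI[of _ "[]"]) auto
next
  case (Suc k)
  obtain T where T: "T \<subseteq> S" "card T = min m (card S)"
    using obtain_subset_with_card_n[of "min m (card S)" S] by auto
  have "card (S - T) \<le> k * m"
    using Suc.prems T card_Diff_subset[OF finite_subset[OF T(1)] T(1)] by auto
  then obtain Ts where Ts: "length Ts = k" "\<forall>U\<in>set Ts. U \<subseteq> S - T \<and> card U \<le> m"
      "\<forall>u\<in>S - T. length (filter (\<lambda>U. u \<in> U) Ts) = 1"
    using Suc.IH[of "S - T"] Suc.prems(1) by blast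
  have "length (filter (\<lambda>U. u \<in> U) Ts) = 0" if "u \<in> T" for u
    using Ts(2) that by (auto simp: filter_empty_conv)
  then show ?case using T Ts by (intro exI[of _ "T # Ts"]) auto
qed

lemma agree_at_within_inv_dist:
  assumes G: "simple_graph V E" and p: "p \<ge> 2" and v: "v \<in> V"
    and A: "is_orientation V E A" and B: "is_orientation V E B"
    and deg: "degree E v \<le> k * (p - 1)"
  shows "\<exists>A1. is_orientation V E A1 \<and> agree_at E v A1 B \<and> inv_dist p V A A1 \<le> k"
proof -
  define S where "S = {u. {v,u} \<in> E \<and> ((v,u) \<in> A \<longleftrightarrow> (v,u) \<notin> B)}"
  have fE: "finite E" using simple_graph_finite_edges[OF G] .
  have SV: "S \<subseteq> V" using G unfolding S_def simple_graph_def by auto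
  then have fS: "finite S" using G finite_subset unfolding simple_graph_def by blast
  have "card S \<le> degree E v"
    unfolding degree_def
  proof (rule card_inj_on_le)
    show "inj_on (\<lambda>u. {v,u}) S" by (auto simp: inj_on_def doubleton_eq_iff)
    show "(\<lambda>u. {v,u}) ` S \<subseteq> {e \<in> E. v \<in> e}" unfolding S_def by auto
    show "finite {e \<in> E. v \<in> e}" using fE by simp
  qed
  then obtain Ts where Ts: "length Ts = k" "\<forall>T\<in>set Ts. T \<subseteq> S \<and> card T \<le> p - 1"
      "\<forall>u\<in>S. length (filter (\<lambda>T. u \<in> T) Ts) = 1"
    using split_into_blocks[OF fS] deg by (meson le_trans)
  define Xs where "Xs = map (insert v) Ts"
  have "inversion_sets p V Xs"
  proof
    fix X assume "X \<in> set Xs"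
    then obtain T where "T \<in> set Ts" "X = insert v T" unfolding Xs_def by auto
    moreover have "finite T" if "T \<subseteq> S" using that fS finite_subset by blast
    ultimately show "X \<subseteq> V \<and> card X \<le> p"
      using Ts(2) SV v p card_insert_le_m1[of p T v] by auto
  qed
  then have "inv_dist p V A (invert_list Xs A) \<le> length Xs"
    by (rule inv_dist_le_length) (rule refl)
  then have "inv_dist p V A (invert_list Xs A) \<le> k"
    using Ts(1) unfolding Xs_def by simp
  moreover have "agree_at E v (invert_list Xs A) B"
    unfolding agree_at_def
  proof (intro allI impI)
    fix u assume e: "{v,u} \<in> E"
    have vu: "v \<noteq> u" using simple_graph_edge_neq[OF G e] .
    have "cover_count Xs v u = length (filter (\<lambda>T. u \<in> T) Ts)"
      using vu unfolding cover_count_def Xs_def by (simp add: filter_map comp_def)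
    also have "\<dots> = (if u \<in> S then 1 else 0)"
      using Ts(2,3) by (auto simp: filter_empty_conv)
    finally show "(v,u) \<in> invert_list Xs A \<longleftrightarrow> (v,u) \<in> B"
      using invert_list_edge_iff[OF A vu e] e unfolding S_def by auto
  qed
  ultimately show ?thesis using is_orientation_invert_list[OF A] by blast
qed

lemma inv_diam_le_del_vertex:
  assumes G: "simple_graph V E" and p: "p \<ge> 2" and v: "v \<in> V"
    and deg: "degree E v \<le> k * (p - 1)"
  shows "inv_diam p V E \<le> inv_diam p (del_vertex_V V v) (del_vertex_E E v) + k"
proof (rule inv_diam_le[OF G])
  fix A B assume A: "is_orientation V E A" and B: "is_orientation V E B"
  obtain A1 where A1: "is_orientation V E A1" "agree_at E v A1 B" "inv_dist p V A A1 \<le> k"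
    using agree_at_within_inv_dist[OF G p v A B deg] by blast
  have "inv_dist p V A B \<le> inv_dist p V A A1 + inv_dist p V A1 B"
    by (rule inv_dist_triangle[OF G p A A1(1) B])
  also have "\<dots> \<le> k + inv_diam p (del_vertex_V V v) (del_vertex_E E v)"
    using A1(3) inv_dist_le_inv_diam_del_vertex[OF G p A1(1) B A1(2)] by linarith
  finally show "inv_dist p V A B \<le> inv_diam p (del_vertex_V V v) (del_vertex_E E v) + k"
    by simp
qed

lemma le_nat_ceiling_divide_mult:
  fixes n m :: nat
  assumes "m > 0"
  shows "n \<le> nat \<lceil>real n / real m\<rceil> * m"
proof -
  have "real n / real m \<le> of_int \<lceil>real n / real m\<rceil>" by (rule le_of_int_ceiling)
  then have "real n \<le> of_int \<lceil>real n / real m\<rceil> * real m"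
    using assms by (simp add: pos_divide_le_eq del: le_of_int_ceiling)
  also have "\<dots> = real (nat \<lceil>real n / real m\<rceil> * m)" by simp
  finally show ?thesis by (simp only: of_nat_le_iff)
qed

lemma le_div_half_mult:
  fixes p d :: nat
  assumes "p \<ge> 2" and "p div 2 \<le> d"
  shows "d \<le> d div (p div 2) * (p - 1)"
proof -
  define q where "q = p div 2"
  define a where "a = d div q"
  have q: "q \<ge> 1" using assms(1) unfolding q_def by simp
  have "1 \<le> a" using div_le_mono[OF assms(2), of q] q unfolding a_def q_def by simp
  have "d mod q \<le> q - 1" using mod_less_divisor[of q d] q by linarith
  also have "\<dots> \<le> a * (q - 1)" using \<open>1 \<le> a\<close> by simp
  finally have rem: "d mod q \<le> a * (q - 1)" .
  have "d = a * q + d mod q" unfolding a_def by simp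
  also have "\<dots> \<le> a * q + a * (q - 1)" using rem by simp
  also have "\<dots> = a * (2 * q - 1)" using q by (simp add: algebra_simps)
  also have "\<dots> \<le> a * (p - 1)" unfolding q_def by (intro mult_le_mono2) presburger
  finally show ?thesis unfolding a_def q_def .
qed

theorem mainTheorem13:
  fixes p :: nat and V :: "'a set" and E :: "'a set set" and v :: 'a
  assumes "p \<ge> 2" and "simple_graph V E" and "v \<in> V"
  defines "q \<equiv> p div 2"
  shows "real (inv_diam p V E) \<le> real (inv_diam p (del_vertex_V V v) (del_vertex_E E v))
           + of_int \<lceil>real (degree E v) / real (p - 1)\<rceil>
         \<and> (degree E v \<ge> q \<longrightarrow>
         real (inv_diam p V E) \<le> real (inv_diam p (del_vertex_V V v) (del_vertex_E E v))
           + of_int \<lfloor>real (degree E v) / real q\<rfloor>)"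
proof -
  let ?d = "degree E v" and ?N = "inv_diam p (del_vertex_V V v) (del_vertex_E E v)"
  have bound: "real (inv_diam p V E) \<le> real ?N + real k" if "?d \<le> k * (p - 1)" for k
    using inv_diam_le_del_vertex[OF assms(2,1,3) that] by (metis of_nat_add of_nat_mono)
  have "real (inv_diam p V E) \<le> real ?N + of_int \<lceil>real ?d / real (p - 1)\<rceil>"
    using bound[OF le_nat_ceiling_divide_mult] assms(1) by simp
  moreover have "real (inv_diam p V E) \<le> real ?N + of_int \<lfloor>real ?d / real q\<rfloor>" if "q \<le> ?d"
    using bound[OF le_div_half_mult[OF assms(1) that[unfolded q_def]]]
    unfolding q_def floor_divide_of_nat_eq by simp
  ultimately show ?thesis by blast
qed

end
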